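(* Let $m\in\mathbb N_0$, $0<\alpha<1$, and $f,g\in E^{m,\alpha}(B_a)$. Then (i) $f+g\in E^{m,\alpha}(B_a)$; (ii) $fg\in E^{m,\alpha}(B_a)$; (iii) if $f\neq0$ at every point of $B_a$, then $1/f\in E^{m,\alpha}(B_a)$. The same three statements hold with $E^{m,\alpha}(B_a)$ replaced by $E^\infty(B_a)$.
   Context: $B_a\subset\mathbb R^3$ is the open ball of radius $a$ centered at the origin, $r=|x|$. $C^{m,\alpha}(B_a)$ denotes functions with derivatives up to order $m$ that are $\alpha$-Hölder continuous on compact subsets of $B_a$. $E^{m,\alpha}(B_a)=\{f=f_1+rf_2:\ f_1,f_2\in C^{m,\alpha}(B_a)\}$ and $E^\infty(B_a)=\{f=f_1+rf_2:\ f_1,f_2\in C^\infty(B_a)\}$. *)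

theory Defs
  imports "HOL-Analysis.Analysis"
begin

definition pderiv3 :: "3 \<Rightarrow> (real^3 \<Rightarrow> real) \<Rightarrow> real^3 \<Rightarrow> real" where
  "pderiv3 i f x = frechet_derivative f (at x) (axis i 1)"

fun pderivs3 :: "3 list \<Rightarrow> (real^3 \<Rightarrow> real) \<Rightarrow> real^3 \<Rightarrow> real" where
  "pderivs3 [] f = f"
| "pderivs3 (i # is) f = pderiv3 i (pderivs3 is f)"

definition loc_holder :: "real \<Rightarrow> (real^3) set \<Rightarrow> (real^3 \<Rightarrow> real) \<Rightarrow> bool" where
  "loc_holder \<alpha> S h \<longleftrightarrow>
     (\<forall>K. compact K \<and> K \<subseteq> S \<longrightarrow>
        (\<exists>C. \<forall>x\<in>K. \<forall>y\<in>K. \<bar>h x - h y\<bar> \<le> C * dist x y powr \<alpha>))"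

definition C_holder :: "nat \<Rightarrow> real \<Rightarrow> (real^3) set \<Rightarrow> (real^3 \<Rightarrow> real) \<Rightarrow> bool" where
  "C_holder m \<alpha> S f \<longleftrightarrow>
     (\<forall>is. length is < m \<longrightarrow> (\<forall>x\<in>S. pderivs3 is f differentiable (at x))) \<and>
     (\<forall>is. length is \<le> m \<longrightarrow> loc_holder \<alpha> S (pderivs3 is f))"

definition C_inf :: "(real^3) set \<Rightarrow> (real^3 \<Rightarrow> real) \<Rightarrow> bool" where
  "C_inf S f \<longleftrightarrow> (\<forall>is. \<forall>x\<in>S. pderivs3 is f differentiable (at x))"

definition E_holder :: "nat \<Rightarrow> real \<Rightarrow> real \<Rightarrow> (real^3 \<Rightarrow> real) \<Rightarrow> bool" where
  "E_holder m \<alpha> a f \<longleftrightarrow>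
     (\<exists>f1 f2. C_holder m \<alpha> (ball 0 a) f1 \<and> C_holder m \<alpha> (ball 0 a) f2 \<and>
        (\<forall>x\<in>ball 0 a. f x = f1 x + norm x * f2 x))"

definition E_inf :: "real \<Rightarrow> (real^3 \<Rightarrow> real) \<Rightarrow> bool" where
  "E_inf a f \<longleftrightarrow>
     (\<exists>f1 f2. C_inf (ball 0 a) f1 \<and> C_inf (ball 0 a) f2 \<and>
        (\<forall>x\<in>ball 0 a. f x = f1 x + norm x * f2 x))"

end

theory Submission
  imports Defs "HOL-Computational_Algebra.Polynomial"
begin

text \<open>Write \<open>r = |x|\<close>. Sums in \<open>E\<close> are clear, and so are products, because \<open>r\<^sup>2 = |x|\<^sup>2\<close> is
  smooth: \<open>(f\<^sub>1 + r f\<^sub>2)(g\<^sub>1 + r g\<^sub>2) = (f\<^sub>1 g\<^sub>1 + r\<^sup>2 f\<^sub>2 g\<^sub>2) + r (f\<^sub>1 g\<^sub>2 + f\<^sub>2 g\<^sub>1)\<close>.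
  For the reciprocal of a nowhere vanishing \<open>f = f\<^sub>1 + r f\<^sub>2\<close>: since \<open>f\<^sub>1(0) \<noteq> 0\<close>, near the origin
  \<open>|f\<^sub>1| > r |f\<^sub>2|\<close> and \<open>1/f = (f\<^sub>1 - r f\<^sub>2) / (f\<^sub>1\<^sup>2 - r\<^sup>2 f\<^sub>2\<^sup>2)\<close> with a regular nonvanishing
  denominator; away from the origin \<open>r\<close> is smooth, so \<open>1/f\<close> is itself regular. A smooth radial
  cutoff glues the two representations.

  Both spaces are treated at once: what is needed of the base regularity \<open>P\<close> imposed on the
  derivatives of order \<open>\<le> m\<close> is closure under sums, products, reciprocals and composition with
  \<open>C\<^sup>1\<close> functions of one variable. Local \<open>\<alpha>\<close>-Hoelder continuity (\<open>\<alpha> \<le> 1\<close>) has these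
  properties, and so has plain continuity, which gives \<open>C\<^sup>\<infinity>\<close> when all orders are required.\<close>

section \<open>Partial derivatives\<close>

lemma pderivs3_append: "pderivs3 (is @ [i]) f = pderivs3 is (pderiv3 i f)"
  by (induction "is") auto

lemma pderiv3_eq_derivative: "(f has_derivative D) (at x) \<Longrightarrow> pderiv3 i f x = D (axis i 1)"
  unfolding pderiv3_def by (metis frechet_derivative_at)

lemma pderiv3_cong_open:
  assumes "open S" "x \<in> S" "\<And>y. y \<in> S \<Longrightarrow> f y = g y"
  shows "pderiv3 i f x = pderiv3 i g x"
proof -
  have "(f has_derivative D) (at x) \<longleftrightarrow> (g has_derivative D) (at x)" for D
    using has_derivative_transform_within_open[OF _ assms(1,2)] assms(3) by metis
  then show ?thesis unfolding pderiv3_def frechet_derivative_def by simp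
qed

lemma pderivs3_cong_open:
  assumes "open S" "x \<in> S" "\<And>y. y \<in> S \<Longrightarrow> f y = g y"
  shows "pderivs3 is f x = pderivs3 is g x"
  using assms(2)
proof (induction "is" arbitrary: x)
  case (Cons i "is")
  then show ?case using pderiv3_cong_open[OF assms(1) Cons.prems Cons.IH] by simp
qed (simp add: assms(3))

lemma differentiable_cong_open:
  assumes "open S" "x \<in> S" "\<And>y. y \<in> S \<Longrightarrow> f y = g y" "f differentiable (at x)"
  shows "g differentiable (at x)"
  using assms has_derivative_transform_within_open unfolding differentiable_def by blast

lemma pderiv3_add:
  "f differentiable (at x) \<Longrightarrow> g differentiable (at x) \<Longrightarrow>
   pderiv3 i (\<lambda>x. f x + g x) x = pderiv3 i f x + pderiv3 i g x"
  by (subst pderiv3_eq_derivative[OF has_derivative_add[OF frechet_derivative_works[THEN iffD1]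
        frechet_derivative_works[THEN iffD1]]]) (auto simp: pderiv3_def)

lemma pderiv3_mult:
  "f differentiable (at x) \<Longrightarrow> g differentiable (at x) \<Longrightarrow>
   pderiv3 i (\<lambda>x. f x * g x) x = f x * pderiv3 i g x + pderiv3 i f x * g x"
  by (subst pderiv3_eq_derivative[OF has_derivative_mult[OF frechet_derivative_works[THEN iffD1]
        frechet_derivative_works[THEN iffD1]]]) (auto simp: pderiv3_def)

lemma pderiv3_inverse:
  "f differentiable (at x) \<Longrightarrow> f x \<noteq> 0 \<Longrightarrow>
   pderiv3 i (\<lambda>x. inverse (f x :: real)) x = - (inverse (f x) * pderiv3 i f x * inverse (f x))"
  by (subst pderiv3_eq_derivative[OF Deriv.has_derivative_inverse[OF _ frechet_derivative_works[THEN iffD1]]])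
    (auto simp: pderiv3_def)

lemma pderiv3_compose:
  assumes "f differentiable (at x)" "(\<phi> has_real_derivative d) (at (f x))"
  shows "pderiv3 i (\<lambda>x. \<phi> (f x)) x = d * pderiv3 i f x"
  using pderiv3_eq_derivative[OF has_derivative_compose[OF assms(1)[unfolded frechet_derivative_works]
        assms(2)[unfolded has_field_derivative_def]]]
  by (simp add: pderiv3_def)

lemma pderiv3_const: "pderiv3 i (\<lambda>x. c) = (\<lambda>x. 0)"
  by (simp add: pderiv3_def fun_eq_iff)

lemma pderiv3_component: "pderiv3 i (\<lambda>x. x $ j) = (\<lambda>x. if j = i then 1 else 0)"
  by (rule ext, subst pderiv3_eq_derivative[OF bounded_linear.has_derivative[OF bounded_linear_vec_nth has_derivative_ident]])
    (simp add: axis_def)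

section \<open>Functions with regular derivatives up to order m\<close>

locale regularity_class =
  fixes P :: "(real^3 \<Rightarrow> real) \<Rightarrow> bool" and S :: "(real^3) set"
  assumes open_domain: "open S"
    and P_cong: "P f \<Longrightarrow> (\<And>x. x \<in> S \<Longrightarrow> f x = g x) \<Longrightarrow> P g"
    and P_add: "P f \<Longrightarrow> P g \<Longrightarrow> P (\<lambda>x. f x + g x)"
    and P_mult: "P f \<Longrightarrow> P g \<Longrightarrow> P (\<lambda>x. f x * g x)"
    and P_inverse: "P f \<Longrightarrow> (\<And>x. x \<in> S \<Longrightarrow> f x \<noteq> 0) \<Longrightarrow> P (\<lambda>x. inverse (f x))"
    and P_const: "P (\<lambda>x. c)"
    and P_component: "P (\<lambda>x. x $ j)"
    and P_compose: "P f \<Longrightarrow> convex U \<Longrightarrow> open U \<Longrightarrow> f ` S \<subseteq> U \<Longrightarrow>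
        (\<And>s. s \<in> U \<Longrightarrow> (\<phi> has_real_derivative \<phi>' s) (at s)) \<Longrightarrow> continuous_on U \<phi>' \<Longrightarrow>
        P (\<lambda>x. \<phi> (f x))"
    and P_continuous: "P f \<Longrightarrow> continuous_on S f"
begin

definition Ck :: "nat \<Rightarrow> (real^3 \<Rightarrow> real) \<Rightarrow> bool" where
  "Ck m f \<longleftrightarrow> (\<forall>is. length is < m \<longrightarrow> (\<forall>x\<in>S. pderivs3 is f differentiable (at x))) \<and>
     (\<forall>is. length is \<le> m \<longrightarrow> P (pderivs3 is f))"

lemma Ck_0: "Ck 0 f \<longleftrightarrow> P f"
  unfolding Ck_def by simp

lemma Ck_Suc:
  "Ck (Suc m) f \<longleftrightarrow> (\<forall>x\<in>S. f differentiable (at x)) \<and> P f \<and> (\<forall>i. Ck m (pderiv3 i f))"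
proof
  assume "Ck (Suc m) f"
  then show "(\<forall>x\<in>S. f differentiable (at x)) \<and> P f \<and> (\<forall>i. Ck m (pderiv3 i f))"
    unfolding Ck_def
    by (metis Suc_le_mono Suc_less_eq le0 length_append_singleton list.size(3) pderivs3.simps(1)
        pderivs3_append zero_less_Suc)
next
  assume H: "(\<forall>x\<in>S. f differentiable (at x)) \<and> P f \<and> (\<forall>i. Ck m (pderiv3 i f))"
  have "(length is < Suc m \<longrightarrow> (\<forall>x\<in>S. pderivs3 is f differentiable (at x))) \<and>
      (length is \<le> Suc m \<longrightarrow> P (pderivs3 is f))" for "is"
    by (cases "is" rule: rev_cases) (use H in \<open>auto simp: Ck_def pderivs3_append\<close>)
  then show "Ck (Suc m) f"
    unfolding Ck_def by blast
qed

lemma Ck_SucD: "Ck (Suc m) f \<Longrightarrow> Ck m f"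
  unfolding Ck_def by auto

lemma Ck_imp_P: "Ck m f \<Longrightarrow> P f"
  unfolding Ck_def by (metis le0 list.size(3) pderivs3.simps(1))

lemma Ck_cong:
  assumes "Ck m f" "\<And>x. x \<in> S \<Longrightarrow> f x = g x"
  shows "Ck m g"
proof -
  have eq: "pderivs3 ds f y = pderivs3 ds g y" if "y \<in> S" for ds y
    using pderivs3_cong_open[OF open_domain that assms(2)] .
  have "pderivs3 ds g differentiable (at x)" if "length ds < m" "x \<in> S" for ds x
    using differentiable_cong_open[OF open_domain that(2), of "pderivs3 ds f" "pderivs3 ds g"] eq assms(1) that
    unfolding Ck_def by blast
  moreover have "P (pderivs3 ds g)" if "length ds \<le> m" for ds
    using P_cong[of "pderivs3 ds f" "pderivs3 ds g"] eq assms(1) that unfolding Ck_def by blast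
  ultimately show ?thesis
    unfolding Ck_def by blast
qed

lemma Ck_add: "Ck m f \<Longrightarrow> Ck m g \<Longrightarrow> Ck m (\<lambda>x. f x + g x)"
proof (induction m arbitrary: f g)
  case (Suc m)
  have "Ck m (pderiv3 i (\<lambda>x. f x + g x))" for i
  proof (rule Ck_cong)
    show "Ck m (\<lambda>x. pderiv3 i f x + pderiv3 i g x)"
      using Suc by (simp add: Ck_Suc)
  qed (use Suc.prems in \<open>auto simp: Ck_Suc pderiv3_add\<close>)
  then show ?case
    using Suc.prems by (auto simp: Ck_Suc P_add)
qed (simp add: Ck_0 P_add)

lemma Ck_const: "Ck m (\<lambda>x. c)"
  by (induction m arbitrary: c) (simp_all add: Ck_0 Ck_Suc P_const pderiv3_const)

lemma Ck_component: "Ck m (\<lambda>x. x $ j)"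
proof (induction m)
  case (Suc m)
  have "(\<lambda>x. x $ j) differentiable (at x)" for x
    using bounded_linear_imp_differentiable[OF bounded_linear_vec_nth] by blast
  then show ?case
    using Suc by (auto simp: Ck_Suc P_component pderiv3_component Ck_const)
qed (simp add: Ck_0 P_component)

lemma Ck_mult: "Ck m f \<Longrightarrow> Ck m g \<Longrightarrow> Ck m (\<lambda>x. f x * g x)"
proof (induction m arbitrary: f g)
  case (Suc m)
  have "Ck m (pderiv3 i (\<lambda>x. f x * g x))" for i
  proof (rule Ck_cong)
    show "Ck m (\<lambda>x. f x * pderiv3 i g x + pderiv3 i f x * g x)"
      using Suc Ck_SucD[OF Suc.prems(1)] Ck_SucD[OF Suc.prems(2)]
      by (intro Ck_add Suc.IH) (auto simp: Ck_Suc)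
  qed (use Suc.prems in \<open>auto simp: Ck_Suc pderiv3_mult\<close>)
  then show ?case
    using Suc.prems by (auto simp: Ck_Suc P_mult)
qed (simp add: Ck_0 P_mult)

lemma Ck_power: "Ck m f \<Longrightarrow> Ck m (\<lambda>x. f x ^ n)"
  by (induction n) (simp_all add: Ck_const Ck_mult)

lemma Ck_uminus: "Ck m f \<Longrightarrow> Ck m (\<lambda>x. - f x)"
  using Ck_mult[OF Ck_const[of m "-1"]] by simp

lemma Ck_diff: "Ck m f \<Longrightarrow> Ck m g \<Longrightarrow> Ck m (\<lambda>x. f x - g x)"
  using Ck_add[OF _ Ck_uminus] by simp

lemma Ck_inverse: "Ck m f \<Longrightarrow> (\<And>x. x \<in> S \<Longrightarrow> f x \<noteq> 0) \<Longrightarrow> Ck m (\<lambda>x. inverse (f x))"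
proof (induction m arbitrary: f)
  case (Suc m)
  have "Ck m (pderiv3 i (\<lambda>x. inverse (f x)))" for i
  proof (rule Ck_cong)
    show "Ck m (\<lambda>x. - (inverse (f x) * pderiv3 i f x * inverse (f x)))"
      using Suc Ck_SucD[OF Suc.prems(1)] by (intro Ck_uminus Ck_mult Suc.IH) (auto simp: Ck_Suc)
  qed (use Suc.prems in \<open>auto simp: Ck_Suc pderiv3_inverse\<close>)
  moreover have "(\<lambda>x. inverse (f x)) differentiable (at x)" if "x \<in> S" for x
    using Suc.prems that by (auto simp: Ck_Suc intro!: derivative_intros)
  ultimately show ?case
    using Suc.prems by (auto simp: Ck_Suc intro: P_inverse)
qed (simp add: Ck_0 P_inverse)

lemma Ck_compose:
  assumes "convex U" "open U"
    and "\<And>n s. s \<in> U \<Longrightarrow> (\<phi> n has_real_derivative \<phi> (Suc n) s) (at s)"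
  shows "Ck m f \<Longrightarrow> f ` S \<subseteq> U \<Longrightarrow> Ck m (\<lambda>x. \<phi> 0 (f x))"
  using assms(3)
proof (induction m arbitrary: f \<phi>)
  case 0
  have "continuous_on U (\<phi> 1)"
    using 0(3)[of _ 1] by (intro continuous_at_imp_continuous_on ballI DERIV_isCont) auto
  then show ?case
    using P_compose[OF _ assms(1,2) 0(2), where \<phi>="\<phi> 0" and \<phi>'="\<phi> 1"] 0 by (auto simp: Ck_0)
next
  case (Suc m)
  have df: "f differentiable (at x)" and fU: "f x \<in> U" if "x \<in> S" for x
    using Suc.prems(1,2) that by (auto simp: Ck_Suc)
  have "Ck m (pderiv3 i (\<lambda>x. \<phi> 0 (f x)))" for i
  proof (rule Ck_cong)
    have "Ck m (\<lambda>x. \<phi> 1 (f x))"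
      using Suc.IH[OF Ck_SucD[OF Suc.prems(1)] Suc.prems(2), of "\<lambda>n. \<phi> (Suc n)"] Suc.prems(3)
      by simp
    then show "Ck m (\<lambda>x. \<phi> 1 (f x) * pderiv3 i f x)"
      using Suc.prems(1) by (intro Ck_mult) (auto simp: Ck_Suc)
  next
    fix x assume "x \<in> S"
    then show "\<phi> 1 (f x) * pderiv3 i f x = pderiv3 i (\<lambda>x. \<phi> 0 (f x)) x"
      using pderiv3_compose[OF df Suc.prems(3)[OF fU]] by simp
  qed
  moreover have "continuous_on U (\<phi> 1)"
    using Suc.prems(3)[of _ 1] by (intro continuous_at_imp_continuous_on ballI DERIV_isCont) auto
  then have "P (\<lambda>x. \<phi> 0 (f x))"
    using P_compose[OF _ assms(1,2) Suc.prems(2), where \<phi>="\<phi> 0" and \<phi>'="\<phi> 1"] Suc.prems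
    by (auto simp: Ck_Suc)
  moreover have "(\<lambda>x. \<phi> 0 (f x)) differentiable (at x)" if "x \<in> S" for x
  proof (rule differentiable_compose[OF _ df[OF that]])
    show "\<phi> 0 differentiable (at (f x))"
      using Suc.prems(3)[OF fU[OF that], of 0] unfolding has_field_derivative_def
      by (rule differentiableI)
  qed
  ultimately show ?case
    using df by (simp add: Ck_Suc)
qed

lemma Ck_norm_sq: "Ck m (\<lambda>x. (norm x)\<^sup>2)"
proof -
  have "(\<lambda>x. (norm x)\<^sup>2) = (\<lambda>x::real^3. x$1 * x$1 + x$2 * x$2 + x$3 * x$3)"
    by (simp add: fun_eq_iff power2_norm_eq_inner inner_vec_def sum_3)
  then show ?thesis
    by (simp add: Ck_add Ck_mult Ck_component)
qed

end

section \<open>Local Hoelder continuity\<close>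

lemma loc_holderE:
  assumes "loc_holder \<alpha> S h" "compact K" "K \<subseteq> S"
  obtains C where "C \<ge> 0" "\<And>x y. x \<in> K \<Longrightarrow> y \<in> K \<Longrightarrow> \<bar>h x - h y\<bar> \<le> C * dist x y powr \<alpha>"
proof -
  obtain C where C: "\<forall>x\<in>K. \<forall>y\<in>K. \<bar>h x - h y\<bar> \<le> C * dist x y powr \<alpha>"
    using assms unfolding loc_holder_def by blast
  show thesis
  proof (rule that[of "max C 0"])
    fix x y assume "x \<in> K" "y \<in> K"
    then have "\<bar>h x - h y\<bar> \<le> C * dist x y powr \<alpha>"
      using C by blast
    also have "\<dots> \<le> max C 0 * dist x y powr \<alpha>"
      by (intro mult_right_mono) auto
    finally show "\<bar>h x - h y\<bar> \<le> max C 0 * dist x y powr \<alpha>" .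
  qed simp
qed

lemma loc_holder_cong:
  "loc_holder \<alpha> S f \<Longrightarrow> (\<And>x. x \<in> S \<Longrightarrow> f x = g x) \<Longrightarrow> loc_holder \<alpha> S g"
  unfolding loc_holder_def by (metis subsetD)

lemma loc_holder_imp_continuous_on:
  assumes "loc_holder \<alpha> S h" "open S" "0 < \<alpha>"
  shows "continuous_on S h"
proof -
  have "isCont h x" if "x \<in> S" for x
  proof -
    obtain e where e: "e > 0" "cball x e \<subseteq> S"
      using assms(2) \<open>x \<in> S\<close> open_contains_cball by blast
    obtain C where C: "\<And>y z. y \<in> cball x e \<Longrightarrow> z \<in> cball x e \<Longrightarrow> \<bar>h y - h z\<bar> \<le> C * dist y z powr \<alpha>"
      using loc_holderE[OF assms(1) compact_cball e(2)] by blast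
    have centre: "x \<in> cball x e"
      using e(1) by simp
    have "eventually (\<lambda>y. y \<in> ball x e) (at x)"
      using eventually_at_ball[OF e(1), of x UNIV] by simp
    then have "eventually (\<lambda>y. norm (h y - h x) \<le> C * dist y x powr \<alpha>) (at x)"
    proof (rule eventually_mono)
      fix y assume "y \<in> ball x e"
      then show "norm (h y - h x) \<le> C * dist y x powr \<alpha>"
        using C[OF _ centre, of y] by simp
    qed
    moreover have "((\<lambda>y. dist y x) \<longlongrightarrow> 0) (at x)"
      using tendsto_dist[OF tendsto_ident_at tendsto_const, of x x] by simp
    then have "((\<lambda>y. dist y x powr \<alpha>) \<longlongrightarrow> 0) (at x)"
      by (rule tendsto_zero_powrI[OF _ tendsto_const]) (use assms(3) in auto)
    then have "((\<lambda>y. C * dist y x powr \<alpha>) \<longlongrightarrow> 0) (at x)"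
      by (rule tendsto_mult_right_zero)
    ultimately show ?thesis
      unfolding isCont_def by (rule LIM_zero_cancel[OF Lim_null_comparison])
  qed
  then show ?thesis
    by (simp add: continuous_at_imp_continuous_on)
qed

lemma loc_holder_bounded:
  assumes "loc_holder \<alpha> S h" "open S" "0 < \<alpha>" "compact K" "K \<subseteq> S"
  obtains B where "\<And>x. x \<in> K \<Longrightarrow> \<bar>h x\<bar> \<le> B"
proof -
  have "compact (h ` K)"
    using continuous_on_subset[OF loc_holder_imp_continuous_on[OF assms(1-3)] assms(5)] assms(4)
    by (rule compact_continuous_image)
  then obtain B where "\<forall>y\<in>h ` K. norm y \<le> B"
    using compact_imp_bounded bounded_iff by metis
  then show thesis
    using that by auto
qed

lemma loc_holder_add:
  assumes "loc_holder \<alpha> S f" "loc_holder \<alpha> S g"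
  shows "loc_holder \<alpha> S (\<lambda>x. f x + g x)"
  unfolding loc_holder_def
proof (intro allI impI)
  fix K assume "compact K \<and> K \<subseteq> S"
  then have K: "compact K" "K \<subseteq> S"
    by auto
  obtain C1 where "C1 \<ge> 0" and
    C1: "\<And>x y. x \<in> K \<Longrightarrow> y \<in> K \<Longrightarrow> \<bar>f x - f y\<bar> \<le> C1 * dist x y powr \<alpha>"
    using loc_holderE[OF assms(1) K] by blast
  obtain C2 where "C2 \<ge> 0" and
    C2: "\<And>x y. x \<in> K \<Longrightarrow> y \<in> K \<Longrightarrow> \<bar>g x - g y\<bar> \<le> C2 * dist x y powr \<alpha>"
    using loc_holderE[OF assms(2) K] by blast
  have "\<bar>f x + g x - (f y + g y)\<bar> \<le> (C1 + C2) * dist x y powr \<alpha>" if "x \<in> K" "y \<in> K" for x y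
  proof -
    have "\<bar>f x + g x - (f y + g y)\<bar> \<le> \<bar>f x - f y\<bar> + \<bar>g x - g y\<bar>"
      using abs_triangle_ineq[of "f x - f y" "g x - g y"] by (simp add: algebra_simps)
    also have "\<dots> \<le> C1 * dist x y powr \<alpha> + C2 * dist x y powr \<alpha>"
      using C1[OF that] C2[OF that] by (rule add_mono)
    finally show ?thesis
      by (simp add: distrib_right)
  qed
  then show "\<exists>C. \<forall>x\<in>K. \<forall>y\<in>K. \<bar>f x + g x - (f y + g y)\<bar> \<le> C * dist x y powr \<alpha>"
    by blast
qed

lemma loc_holder_mult:
  assumes "loc_holder \<alpha> S f" "loc_holder \<alpha> S g" "open S" "0 < \<alpha>"
  shows "loc_holder \<alpha> S (\<lambda>x. f x * g x)"
  unfolding loc_holder_def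
proof (intro allI impI)
  fix K assume "compact K \<and> K \<subseteq> S"
  then have K: "compact K" "K \<subseteq> S"
    by auto
  obtain C1 where
    C1: "C1 \<ge> 0" "\<And>x y. x \<in> K \<Longrightarrow> y \<in> K \<Longrightarrow> \<bar>f x - f y\<bar> \<le> C1 * dist x y powr \<alpha>"
    using loc_holderE[OF assms(1) K] by blast
  obtain C2 where
    C2: "C2 \<ge> 0" "\<And>x y. x \<in> K \<Longrightarrow> y \<in> K \<Longrightarrow> \<bar>g x - g y\<bar> \<le> C2 * dist x y powr \<alpha>"
    using loc_holderE[OF assms(2) K] by blast
  obtain B1 where B1: "\<And>x. x \<in> K \<Longrightarrow> \<bar>f x\<bar> \<le> B1"
    using loc_holder_bounded[OF assms(1,3,4) K] by blast
  obtain B2 where B2: "\<And>x. x \<in> K \<Longrightarrow> \<bar>g x\<bar> \<le> B2"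
    using loc_holder_bounded[OF assms(2,3,4) K] by blast
  have "\<bar>f x * g x - f y * g y\<bar> \<le> (B1 * C2 + B2 * C1) * dist x y powr \<alpha>"
    if "x \<in> K" "y \<in> K" for x y
  proof -
    have "f x * g x - f y * g y = f x * (g x - g y) + g y * (f x - f y)"
      by (simp add: algebra_simps)
    then have "\<bar>f x * g x - f y * g y\<bar> \<le> \<bar>f x\<bar> * \<bar>g x - g y\<bar> + \<bar>g y\<bar> * \<bar>f x - f y\<bar>"
      by (simp add: abs_mult[symmetric] abs_triangle_ineq)
    also have "\<dots> \<le> B1 * (C2 * dist x y powr \<alpha>) + B2 * (C1 * dist x y powr \<alpha>)"
      using B1[OF that(1)] B2[OF that(2)] order_trans[OF abs_ge_zero B1[OF that(1)]]
        C1(2)[OF that] C2(2)[OF that]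
      by (intro add_mono mult_mono) auto
    finally show ?thesis
      by (simp add: algebra_simps)
  qed
  then show "\<exists>C. \<forall>x\<in>K. \<forall>y\<in>K. \<bar>f x * g x - f y * g y\<bar> \<le> C * dist x y powr \<alpha>"
    by blast
qed

lemma loc_holder_inverse:
  assumes "loc_holder \<alpha> S f" "open S" "0 < \<alpha>" "\<And>x. x \<in> S \<Longrightarrow> f x \<noteq> 0"
  shows "loc_holder \<alpha> S (\<lambda>x. inverse (f x))"
  unfolding loc_holder_def
proof (intro allI impI)
  fix K assume "compact K \<and> K \<subseteq> S"
  then have K: "compact K" "K \<subseteq> S"
    by auto
  obtain C where C: "C \<ge> 0" "\<And>x y. x \<in> K \<Longrightarrow> y \<in> K \<Longrightarrow> \<bar>f x - f y\<bar> \<le> C * dist x y powr \<alpha>"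
    using loc_holderE[OF assms(1) K] by blast
  have "continuous_on K (\<lambda>x. inverse (f x))"
    using continuous_on_subset[OF loc_holder_imp_continuous_on[OF assms(1-3)]] K assms(4)
    by (intro continuous_intros) auto
  then have "compact ((\<lambda>x. inverse (f x)) ` K)"
    using K by (intro compact_continuous_image) auto
  then obtain B where B: "\<forall>y\<in>(\<lambda>x. inverse (f x)) ` K. norm y \<le> B"
    using compact_imp_bounded bounded_iff by metis
  have "\<bar>inverse (f x) - inverse (f y)\<bar> \<le> (B * B * C) * dist x y powr \<alpha>"
    if "x \<in> K" "y \<in> K" for x y
  proof -
    have Bx: "\<bar>inverse (f x)\<bar> \<le> B" and By: "\<bar>inverse (f y)\<bar> \<le> B"
      using B that by auto
    have "inverse (f x) - inverse (f y) = inverse (f x) * inverse (f y) * (f y - f x)"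
      using assms(4) that K by (subst inverse_diff_inverse) (auto simp: algebra_simps)
    then have "\<bar>inverse (f x) - inverse (f y)\<bar> = \<bar>inverse (f x)\<bar> * \<bar>inverse (f y)\<bar> * \<bar>f x - f y\<bar>"
      by (simp add: abs_mult abs_minus_commute)
    also have "\<dots> \<le> B * B * (C * dist x y powr \<alpha>)"
      using Bx By order_trans[OF abs_ge_zero Bx] C(2)[OF that] by (intro mult_mono) auto
    finally show ?thesis
      by (simp add: mult.assoc)
  qed
  then show "\<exists>C. \<forall>x\<in>K. \<forall>y\<in>K. \<bar>inverse (f x) - inverse (f y)\<bar> \<le> C * dist x y powr \<alpha>"
    by blast
qed

lemma dist_le_diameter_powr:
  fixes K :: "'a::metric_space set"
  assumes "bounded K" "x \<in> K" "y \<in> K" "0 < \<alpha>" "\<alpha> \<le> 1"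
  shows "dist x y \<le> diameter K powr (1 - \<alpha>) * dist x y powr \<alpha>"
proof (cases "x = y")
  case False
  have "dist x y = dist x y powr (1 - \<alpha>) * dist x y powr \<alpha>"
    using False by (simp add: powr_add[symmetric])
  also have "\<dots> \<le> diameter K powr (1 - \<alpha>) * dist x y powr \<alpha>"
    using diameter_bounded_bound[OF assms(1-3)] assms(5)
    by (intro mult_right_mono powr_mono2) auto
  finally show ?thesis .
qed simp

lemma loc_holder_lipschitz:
  assumes "0 < \<alpha>" "\<alpha> \<le> 1" "\<And>x y. x \<in> S \<Longrightarrow> y \<in> S \<Longrightarrow> \<bar>h x - h y\<bar> \<le> L * dist x y"
  shows "loc_holder \<alpha> S h"
  unfolding loc_holder_def
proof (intro allI impI)
  fix K assume "compact K \<and> K \<subseteq> S"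
  then have K: "compact K" "K \<subseteq> S"
    by auto
  have "\<bar>h x - h y\<bar> \<le> (\<bar>L\<bar> * diameter K powr (1 - \<alpha>)) * dist x y powr \<alpha>"
    if "x \<in> K" "y \<in> K" for x y
  proof -
    have "\<bar>h x - h y\<bar> \<le> L * dist x y"
      using assms(3) K that by blast
    also have "\<dots> \<le> \<bar>L\<bar> * dist x y"
      by (intro mult_right_mono) auto
    also have "\<dots> \<le> \<bar>L\<bar> * (diameter K powr (1 - \<alpha>) * dist x y powr \<alpha>)"
      using dist_le_diameter_powr[OF compact_imp_bounded that assms(1,2)] K
      by (intro mult_left_mono) auto
    finally show ?thesis
      by (simp add: mult.assoc)
  qed
  then show "\<exists>C. \<forall>x\<in>K. \<forall>y\<in>K. \<bar>h x - h y\<bar> \<le> C * dist x y powr \<alpha>"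
    by blast
qed

lemma loc_holder_compose:
  assumes f: "loc_holder \<alpha> S f" "open S" "0 < \<alpha>"
    and U: "convex U" "f ` S \<subseteq> U"
    and \<phi>: "\<And>s. s \<in> U \<Longrightarrow> (\<phi> has_real_derivative \<phi>' s) (at s)" "continuous_on U \<phi>'"
  shows "loc_holder \<alpha> S (\<lambda>x. \<phi> (f x))"
  unfolding loc_holder_def
proof (intro allI impI)
  fix K assume "compact K \<and> K \<subseteq> S"
  then have K: "compact K" "K \<subseteq> S"
    by auto
  obtain C where C: "C \<ge> 0" "\<And>x y. x \<in> K \<Longrightarrow> y \<in> K \<Longrightarrow> \<bar>f x - f y\<bar> \<le> C * dist x y powr \<alpha>"
    using loc_holderE[OF f(1) K] by blast
  define H where "H = convex hull (f ` K)"
  have "compact (f ` K)"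
    using continuous_on_subset[OF loc_holder_imp_continuous_on[OF f]] K
    by (intro compact_continuous_image) auto
  then have "compact H"
    unfolding H_def by (rule compact_convex_hull)
  have "H \<subseteq> U"
    unfolding H_def using U K by (intro hull_minimal) auto
  have "compact (\<phi>' ` H)"
    using continuous_on_subset[OF \<phi>(2) \<open>H \<subseteq> U\<close>] \<open>compact H\<close> by (rule compact_continuous_image)
  then obtain L where L: "\<forall>s\<in>\<phi>' ` H. norm s \<le> L"
    using compact_imp_bounded bounded_iff by metis
  have lip: "\<bar>\<phi> s - \<phi> t\<bar> \<le> L * \<bar>s - t\<bar>" if "s \<in> H" "t \<in> H" for s t
  proof -
    have "norm (\<phi> s - \<phi> t) \<le> L * norm (s - t)"
    proof (rule field_differentiable_bound[OF _ _ _ that])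
      show "convex H"
        unfolding H_def by (rule convex_convex_hull)
      show "(\<phi> has_field_derivative \<phi>' z) (at z within H)" if "z \<in> H" for z
        using \<phi>(1) \<open>H \<subseteq> U\<close> that by (auto intro: has_field_derivative_at_within)
      show "norm (\<phi>' z) \<le> L" if "z \<in> H" for z
        using L that by blast
    qed
    then show ?thesis
      by simp
  qed
  have "\<bar>\<phi> (f x) - \<phi> (f y)\<bar> \<le> (\<bar>L\<bar> * C) * dist x y powr \<alpha>" if "x \<in> K" "y \<in> K" for x y
  proof -
    have "f x \<in> H" "f y \<in> H"
      unfolding H_def using that hull_subset[of "f ` K"] by auto
    then have "\<bar>\<phi> (f x) - \<phi> (f y)\<bar> \<le> L * \<bar>f x - f y\<bar>"
      by (rule lip)
    also have "\<dots> \<le> \<bar>L\<bar> * \<bar>f x - f y\<bar>"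
      by (intro mult_right_mono) auto
    also have "\<dots> \<le> \<bar>L\<bar> * (C * dist x y powr \<alpha>)"
      using C that by (intro mult_left_mono) auto
    finally show ?thesis
      by (simp add: mult.assoc)
  qed
  then show "\<exists>C. \<forall>x\<in>K. \<forall>y\<in>K. \<bar>\<phi> (f x) - \<phi> (f y)\<bar> \<le> C * dist x y powr \<alpha>"
    by blast
qed

lemma regularity_class_loc_holder:
  assumes "open S" "0 < \<alpha>" "\<alpha> \<le> 1"
  shows "regularity_class (loc_holder \<alpha> S) S"
proof
  show "open S"
    by (fact assms(1))
  show "loc_holder \<alpha> S g" if "loc_holder \<alpha> S f" "\<And>x. x \<in> S \<Longrightarrow> f x = g x" for f g
    by (rule loc_holder_cong[OF that])
  show "loc_holder \<alpha> S (\<lambda>x. f x + g x)" if "loc_holder \<alpha> S f" "loc_holder \<alpha> S g" for f g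
    by (rule loc_holder_add[OF that])
  show "loc_holder \<alpha> S (\<lambda>x. f x * g x)" if "loc_holder \<alpha> S f" "loc_holder \<alpha> S g" for f g
    by (rule loc_holder_mult[OF that assms(1,2)])
  show "loc_holder \<alpha> S (\<lambda>x. inverse (f x))"
    if "loc_holder \<alpha> S f" "\<And>x. x \<in> S \<Longrightarrow> f x \<noteq> 0" for f
    by (rule loc_holder_inverse[OF that(1) assms(1,2) that(2)])
  show "loc_holder \<alpha> S (\<lambda>x. c)" for c
    by (rule loc_holder_lipschitz[OF assms(2,3), where L=0]) simp
  show "loc_holder \<alpha> S (\<lambda>x. x $ j)" for j
    by (rule loc_holder_lipschitz[OF assms(2,3), where L=1]) (metis dist_real_def dist_vec_nth_le mult_1)
  show "loc_holder \<alpha> S (\<lambda>x. \<phi> (f x))"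
    if "loc_holder \<alpha> S f" "convex U" "open U" "f ` S \<subseteq> U"
      "\<And>s. s \<in> U \<Longrightarrow> (\<phi> has_real_derivative \<phi>' s) (at s)" "continuous_on U \<phi>'"
    for f U \<phi> \<phi>'
    by (rule loc_holder_compose[OF that(1) assms(1,2) that(2,4-6)])
  show "continuous_on S f" if "loc_holder \<alpha> S f" for f
    by (rule loc_holder_imp_continuous_on[OF that assms(1,2)])
qed

lemma regularity_class_continuous_on:
  assumes "open S"
  shows "regularity_class (continuous_on S) S"
proof
  show "open S"
    by (fact assms)
  show "continuous_on S g" if "continuous_on S f" "\<And>x. x \<in> S \<Longrightarrow> f x = g x" for f g :: "real^3 \<Rightarrow> real"
    using iffD1[OF continuous_on_cong[OF refl that(2)] that(1)] .
  show "continuous_on S (\<lambda>x. f x + g x)" if "continuous_on S f" "continuous_on S g"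
    for f g :: "real^3 \<Rightarrow> real"
    using continuous_on_add[OF that] .
  show "continuous_on S (\<lambda>x. f x * g x)" if "continuous_on S f" "continuous_on S g"
    for f g :: "real^3 \<Rightarrow> real"
    using continuous_on_mult[OF that] .
  show "continuous_on S (\<lambda>x. inverse (f x))"
    if "continuous_on S f" "\<And>x. x \<in> S \<Longrightarrow> f x \<noteq> 0" for f :: "real^3 \<Rightarrow> real"
    using that by (intro continuous_intros) auto
  show "continuous_on S (\<lambda>x. c)" "continuous_on S (\<lambda>x. x $ j)" for c :: real and j
    by (intro continuous_intros)+
  show "continuous_on S (\<lambda>x. \<phi> (f x))"
    if "continuous_on S f" "f ` S \<subseteq> U" "\<And>s. s \<in> U \<Longrightarrow> (\<phi> has_real_derivative \<phi>' s) (at s)"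
    for f :: "real^3 \<Rightarrow> real" and U \<phi> \<phi>'
  proof (rule continuous_on_compose2[OF _ that(1,2)])
    show "continuous_on U \<phi>"
      using that(3) by (intro continuous_at_imp_continuous_on ballI DERIV_isCont) auto
  qed
qed

section \<open>A flat function and smooth radial cutoffs\<close>

definition flat_exp :: "real poly \<Rightarrow> real \<Rightarrow> real" where
  "flat_exp p s = (if 0 < s then poly p (inverse s) * exp (- inverse s) else 0)"

text \<open>For \<open>s > 0\<close>: \<open>d/ds (p(1/s) exp(-1/s)) = q(1/s) exp(-1/s)\<close> with \<open>q(u) = u\<^sup>2 (p(u) - p'(u))\<close>.\<close>

definition flat_exp_deriv_poly :: "real poly \<Rightarrow> real poly" where
  "flat_exp_deriv_poly p = [:0, 0, 1:] * (p - pderiv p)"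

lemma poly_times_exp_minus_tendsto_0:
  fixes p :: "real poly"
  shows "((\<lambda>u. poly p u * exp (- u)) \<longlongrightarrow> 0) at_top"
proof -
  have "((\<lambda>u. \<Sum>i\<le>degree p. coeff p i * (u ^ i / exp u)) \<longlongrightarrow> 0) at_top"
    by (intro tendsto_null_sum tendsto_mult_right_zero tendsto_power_div_exp_0)
  moreover have "poly p u * exp (- u) = (\<Sum>i\<le>degree p. coeff p i * (u ^ i / exp u))" for u :: real
    by (simp add: poly_altdef sum_distrib_right exp_minus divide_inverse mult.assoc)
  ultimately show ?thesis
    by simp
qed

lemma poly_inverse_times_exp_tendsto_0:
  fixes p :: "real poly"
  shows "((\<lambda>s. poly p (inverse s) * exp (- inverse s)) \<longlongrightarrow> 0) (at_right 0)"
  using filterlim_compose[OF poly_times_exp_minus_tendsto_0 filterlim_inverse_at_top_right] by simp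

lemma has_real_derivative_flat_exp_pos:
  assumes "0 < s"
  shows "(flat_exp p has_real_derivative flat_exp (flat_exp_deriv_poly p) s) (at s)"
proof -
  have inv: "(inverse has_real_derivative - inverse (s^2)) (at s)"
    using DERIV_inverse[of s] assms by (simp add: power2_eq_square power_inverse)
  have "((\<lambda>s. poly p (inverse s) * exp (- inverse s)) has_real_derivative
      poly (pderiv p) (inverse s) * (- inverse (s^2)) * exp (- inverse s)
      + poly p (inverse s) * (exp (- inverse s) * inverse (s^2))) (at s)"
    using DERIV_mult[OF DERIV_chain2[OF poly_DERIV inv] DERIV_chain2[OF DERIV_exp DERIV_minus[OF inv]]]
    by (simp add: algebra_simps)
  moreover have "poly (pderiv p) (inverse s) * (- inverse (s^2)) * exp (- inverse s)
      + poly p (inverse s) * (exp (- inverse s) * inverse (s^2)) = flat_exp (flat_exp_deriv_poly p) s"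
    using assms by (simp add: flat_exp_def flat_exp_deriv_poly_def power2_eq_square algebra_simps)
  ultimately have "((\<lambda>s. poly p (inverse s) * exp (- inverse s)) has_real_derivative
      flat_exp (flat_exp_deriv_poly p) s) (at s)"
    by simp
  then show ?thesis
    by (rule has_field_derivative_transform_within_open[where S="{0<..}"])
      (use assms in \<open>auto simp: flat_exp_def\<close>)
qed

lemma has_real_derivative_flat_exp_neg:
  assumes "s < 0"
  shows "(flat_exp p has_real_derivative flat_exp q s) (at s)"
proof -
  have "((\<lambda>s. 0) has_real_derivative 0) (at s)"
    by simp
  then have "(flat_exp p has_real_derivative 0) (at s)"
    by (rule has_field_derivative_transform_within_open[where S="{..<0}"])
      (use assms in \<open>auto simp: flat_exp_def\<close>)
  then show ?thesis
    using assms by (simp add: flat_exp_def)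
qed

lemma has_real_derivative_flat_exp_0: "(flat_exp p has_real_derivative flat_exp q 0) (at 0)"
proof -
  have "((\<lambda>y. (flat_exp p y - flat_exp p 0) / (y - 0)) \<longlongrightarrow> 0) (at (0::real))"
  proof (rule filterlim_split_at)
    have "eventually (\<lambda>y. 0 = (flat_exp p y - flat_exp p 0) / (y - 0)) (at_left (0::real))"
      unfolding eventually_at_left_field by (intro exI[of _ "-1"]) (auto simp: flat_exp_def)
    then show "((\<lambda>y. (flat_exp p y - flat_exp p 0) / (y - 0)) \<longlongrightarrow> 0) (at_left 0)"
      by (rule Lim_transform_eventually[OF tendsto_const])
  next
    have "eventually (\<lambda>y. poly (pCons 0 p) (inverse y) * exp (- inverse y)
        = (flat_exp p y - flat_exp p 0) / (y - 0)) (at_right (0::real))"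
      unfolding eventually_at_right_field by (intro exI[of _ 1]) (auto simp: flat_exp_def field_simps)
    then show "((\<lambda>y. (flat_exp p y - flat_exp p 0) / (y - 0)) \<longlongrightarrow> 0) (at_right 0)"
      by (rule Lim_transform_eventually[OF poly_inverse_times_exp_tendsto_0])
  qed
  then show ?thesis
    by (simp add: has_field_derivative_iff flat_exp_def)
qed

lemma has_real_derivative_flat_exp:
  "(flat_exp p has_real_derivative flat_exp (flat_exp_deriv_poly p) s) (at s)"
  using has_real_derivative_flat_exp_pos has_real_derivative_flat_exp_neg has_real_derivative_flat_exp_0
  by (cases "0 < s"; cases "s < 0") auto

definition psi :: "real \<Rightarrow> real" where
  "psi = flat_exp 1"

lemma psi_eq: "psi s = (if 0 < s then exp (- inverse s) else 0)"
  by (simp add: psi_def flat_exp_def)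

lemma psi_pos_iff: "0 < psi s \<longleftrightarrow> 0 < s"
  by (simp add: psi_eq)

lemma psi_nonneg: "0 \<le> psi s"
  by (simp add: psi_eq)

lemma psi_eq_0: "s \<le> 0 \<Longrightarrow> psi s = 0"
  by (simp add: psi_eq)

lemma has_real_derivative_powr_iterated:
  assumes "0 < t"
  shows "((\<lambda>t. (\<Prod>k<n. 1/2 - real k) * t powr (1/2 - real n)) has_real_derivative
      (\<Prod>k<Suc n. 1/2 - real k) * t powr (1/2 - real (Suc n))) (at t)"
  using DERIV_cmult[OF has_real_derivative_powr[OF assms, of "1/2 - real n"], of "\<Prod>k<n. 1/2 - real k"]
  by (simp add: algebra_simps diff_diff_eq)

definition cutoff :: "real \<Rightarrow> real^3 \<Rightarrow> real" where
  "cutoff d x = psi (2 * d - (norm x)\<^sup>2) / (psi (2 * d - (norm x)\<^sup>2) + psi ((norm x)\<^sup>2 - d))"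

lemma cutoff_denom_pos: "0 < d \<Longrightarrow> 0 < psi (2 * d - (norm x)\<^sup>2) + psi ((norm x)\<^sup>2 - d)"
  by (cases "(norm x)\<^sup>2 < 2 * d") (auto intro: add_pos_nonneg add_nonneg_pos simp: psi_pos_iff psi_nonneg)

lemma cutoff_eq_1: "0 < d \<Longrightarrow> (norm x)\<^sup>2 \<le> d \<Longrightarrow> cutoff d x = 1"
  using cutoff_denom_pos[of d x] by (simp add: cutoff_def psi_eq_0)

lemma cutoff_eq_0: "2 * d \<le> (norm x)\<^sup>2 \<Longrightarrow> cutoff d x = 0"
  by (simp add: cutoff_def psi_eq_0)

lemma cutoff_nonneg: "0 \<le> cutoff d x"
  by (simp add: cutoff_def psi_nonneg)

lemma cutoff_le_1: "0 < d \<Longrightarrow> cutoff d x \<le> 1"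
  using cutoff_denom_pos[of d x] psi_nonneg[of "(norm x)\<^sup>2 - d"] by (simp add: cutoff_def)

definition smooth_norm :: "real \<Rightarrow> real^3 \<Rightarrow> real" where
  "smooth_norm d x = sqrt ((norm x)\<^sup>2 + psi (d - (norm x)\<^sup>2))"

lemma smooth_norm_eq: "d \<le> (norm x)\<^sup>2 \<Longrightarrow> smooth_norm d x = norm x"
  by (simp add: smooth_norm_def psi_eq_0)

lemma cutoff_complement_smooth_norm:
  assumes "0 < d"
  shows "(1 - cutoff d x) * smooth_norm d x = (1 - cutoff d x) * norm x"
  using smooth_norm_eq[of d x] cutoff_eq_1[OF assms, of x] by (cases "d \<le> (norm x)\<^sup>2") auto

context regularity_class
begin

lemma Ck_psi: "Ck m g \<Longrightarrow> Ck m (\<lambda>x. psi (g x))"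
  using Ck_compose[of UNIV "\<lambda>n. flat_exp ((flat_exp_deriv_poly ^^ n) 1)"]
  by (simp add: psi_def has_real_derivative_flat_exp)

lemma Ck_sqrt:
  assumes "Ck m g" "\<And>x. x \<in> S \<Longrightarrow> 0 < g x"
  shows "Ck m (\<lambda>x. sqrt (g x))"
proof (rule Ck_cong)
  show "Ck m (\<lambda>x. (\<Prod>k<0. 1/2 - real k) * g x powr (1/2 - real 0))"
    using Ck_compose[of "{0<..}" "\<lambda>n t. (\<Prod>k<n. 1/2 - real k) * t powr (1/2 - real n)", OF _ _ _ assms(1)]
      assms(2) has_real_derivative_powr_iterated by auto
  show "(\<Prod>k<0. 1/2 - real k) * g x powr (1/2 - real 0) = sqrt (g x)" if "x \<in> S" for x
    using assms(2)[OF that] by (simp add: powr_half_sqrt)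
qed

lemma Ck_cutoff:
  assumes "0 < d"
  shows "Ck m (cutoff d)"
proof -
  have nonzero: "psi (2 * d - (norm x)\<^sup>2) + psi ((norm x)\<^sup>2 - d) \<noteq> 0" for x :: "real^3"
    using cutoff_denom_pos[OF assms, of x] by linarith
  have "Ck m (\<lambda>x. psi (2 * d - (norm x)\<^sup>2) *
      inverse (psi (2 * d - (norm x)\<^sup>2) + psi ((norm x)\<^sup>2 - d)))"
    by (intro Ck_mult Ck_inverse Ck_add Ck_psi Ck_diff Ck_const Ck_norm_sq nonzero)
  then show ?thesis
    by (simp add: cutoff_def[abs_def] divide_inverse)
qed

lemma Ck_smooth_norm:
  assumes "0 < d"
  shows "Ck m (smooth_norm d)"
proof -
  have "0 < (norm x)\<^sup>2 + psi (d - (norm x)\<^sup>2)" for x :: "real^3"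
  proof (cases "x = 0")
    case False
    then show ?thesis
      using psi_nonneg[of "d - (norm x)\<^sup>2"] by (simp add: add_pos_nonneg)
  qed (simp add: assms psi_pos_iff)
  then show ?thesis
    unfolding smooth_norm_def[abs_def] by (intro Ck_sqrt Ck_add Ck_psi Ck_diff Ck_const Ck_norm_sq)
qed

end

section \<open>Reciprocals\<close>

lemma dominated_near_0:
  fixes f1 f2 :: "'a::real_normed_vector \<Rightarrow> real"
  assumes "continuous_on S f1" "continuous_on S f2" "0 \<in> S" "f1 0 \<noteq> 0"
  obtains e where "0 < e" "\<And>x. x \<in> S \<Longrightarrow> norm x < e \<Longrightarrow> norm x * \<bar>f2 x\<bar> < \<bar>f1 x\<bar>"
proof -
  define h where "h x = \<bar>f1 x\<bar> - norm x * \<bar>f2 x\<bar>" for x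
  have "continuous_on S h"
    unfolding h_def using assms(1,2) by (intro continuous_intros)
  moreover have "0 < h 0"
    using assms(4) by (simp add: h_def)
  ultimately have "\<exists>e>0. \<forall>x\<in>S. dist x 0 < e \<longrightarrow> dist (h x) (h 0) < h 0"
    using assms(3) unfolding continuous_on_iff by blast
  then obtain e where "0 < e" and e: "\<And>x. x \<in> S \<Longrightarrow> dist x 0 < e \<Longrightarrow> dist (h x) (h 0) < h 0"
    by blast
  show thesis
  proof (rule that[OF \<open>0 < e\<close>])
    fix x assume "x \<in> S" "norm x < e"
    then have "dist (h x) (h 0) < h 0"
      using e by simp
    then have "0 < h x"
      by (simp add: dist_real_def abs_less_iff)
    then show "norm x * \<bar>f2 x\<bar> < \<bar>f1 x\<bar>"
      by (simp add: h_def)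
  qed
qed

text \<open>\<open>far_denom\<close> is \<open>u + r v\<close> with \<open>r\<close> replaced by a smooth function that agrees with it
  where \<open>|x|\<^sup>2 \<ge> 2d\<close>; \<open>near_denom\<close> is \<open>u\<^sup>2 - r\<^sup>2 v\<^sup>2\<close> where \<open>|x|\<^sup>2 \<le> 4d\<close> and \<open>1\<close> where \<open>|x|\<^sup>2 \<ge> 8d\<close>.\<close>

definition far_denom :: "real \<Rightarrow> real^3 \<Rightarrow> real \<Rightarrow> real \<Rightarrow> real" where
  "far_denom d x u v = u + (1 - cutoff d x) * smooth_norm d x * v"

definition near_denom :: "real \<Rightarrow> real^3 \<Rightarrow> real \<Rightarrow> real \<Rightarrow> real" where
  "near_denom d x u v = cutoff (4 * d) x * (u\<^sup>2 - (norm x)\<^sup>2 * v\<^sup>2) + (1 - cutoff (4 * d) x)"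

definition recip_coeff0 :: "real \<Rightarrow> real^3 \<Rightarrow> real \<Rightarrow> real \<Rightarrow> real" where
  "recip_coeff0 d x u v =
     (1 - cutoff (2 * d) x) / far_denom d x u v + cutoff (2 * d) x * u / near_denom d x u v"

definition recip_coeff1 :: "real \<Rightarrow> real^3 \<Rightarrow> real \<Rightarrow> real \<Rightarrow> real" where
  "recip_coeff1 d x u v = - (cutoff (2 * d) x * v / near_denom d x u v)"

context
  fixes d :: real and x :: "real^3" and u v :: real
  assumes d_pos: "0 < d"
    and dominated: "(norm x)\<^sup>2 < 8 * d \<Longrightarrow> norm x * \<bar>v\<bar> < \<bar>u\<bar>"
    and nonzero: "u + norm x * v \<noteq> 0"
begin

lemma far_denom_eq: "2 * d \<le> (norm x)\<^sup>2 \<Longrightarrow> far_denom d x u v = u + norm x * v"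
  using cutoff_eq_0[of d x] smooth_norm_eq[of d x] d_pos by (simp add: far_denom_def)

lemma far_denom_nonzero: "far_denom d x u v \<noteq> 0"
proof (cases "2 * d \<le> (norm x)\<^sup>2")
  case True
  then show ?thesis
    using far_denom_eq nonzero by simp
next
  case False
  have "\<bar>(1 - cutoff d x) * norm x * v\<bar> = (1 - cutoff d x) * (norm x * \<bar>v\<bar>)"
    using cutoff_le_1[OF d_pos, of x] by (simp add: abs_mult)
  also have "\<dots> \<le> norm x * \<bar>v\<bar>"
    using cutoff_nonneg[of d x] cutoff_le_1[OF d_pos, of x] by (intro mult_left_le_one_le) auto
  also have "\<dots> < \<bar>u\<bar>"
    using False d_pos by (intro dominated) simp
  finally show ?thesis
    using cutoff_complement_smooth_norm[OF d_pos, of x]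
    by (auto simp: far_denom_def mult.assoc)
qed

lemma near_denom_eq: "(norm x)\<^sup>2 \<le> 4 * d \<Longrightarrow> near_denom d x u v = (u - norm x * v) * (u + norm x * v)"
  using d_pos by (simp add: near_denom_def cutoff_eq_1 algebra_simps power2_eq_square)

lemma near_denom_pos: "0 < near_denom d x u v"
proof (cases "(norm x)\<^sup>2 < 8 * d")
  case True
  then have "(norm x * \<bar>v\<bar>)\<^sup>2 < \<bar>u\<bar>\<^sup>2"
    using dominated by (intro power_strict_mono) auto
  then have "0 < u\<^sup>2 - (norm x)\<^sup>2 * v\<^sup>2"
    by (simp add: power_mult_distrib)
  then show ?thesis
    using cutoff_nonneg[of "4 * d" x] cutoff_le_1[of "4 * d" x] d_pos
    unfolding near_denom_def
    by (cases "cutoff (4 * d) x = 0") (auto intro: add_pos_nonneg)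
next
  case False
  then show ?thesis
    by (simp add: near_denom_def cutoff_eq_0)
qed

lemma inverse_eq_recip_coeffs:
  "inverse (u + norm x * v) = recip_coeff0 d x u v + norm x * recip_coeff1 d x u v"
proof -
  define c where "c = cutoff (2 * d) x"
  have far: "(1 - c) / far_denom d x u v = (1 - c) / (u + norm x * v)"
  proof (cases "c = 1")
    case False
    then have "\<not> (norm x)\<^sup>2 \<le> 2 * d"
      using cutoff_eq_1[of "2 * d" x] d_pos by (auto simp: c_def)
    then have "2 * d \<le> (norm x)\<^sup>2"
      by linarith
    then show ?thesis
      by (simp add: far_denom_eq)
  qed simp
  have near: "c * (u - norm x * v) / near_denom d x u v = c / (u + norm x * v)"
  proof (cases "c = 0")
    case False
    then have "\<not> 2 * (2 * d) \<le> (norm x)\<^sup>2"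
      using cutoff_eq_0[of "2 * d" x] by (auto simp: c_def)
    then have "(norm x)\<^sup>2 < 4 * d"
      by linarith
    moreover have "u - norm x * v \<noteq> 0"
      using dominated calculation d_pos by (auto simp: abs_mult)
    ultimately show ?thesis
      by (simp add: near_denom_eq)
  qed simp
  have "recip_coeff0 d x u v + norm x * recip_coeff1 d x u v
      = (1 - c) / far_denom d x u v + c * (u - norm x * v) / near_denom d x u v"
    by (simp add: recip_coeff0_def recip_coeff1_def c_def algebra_simps diff_divide_distrib)
  also have "\<dots> = inverse (u + norm x * v)"
    unfolding far near by (simp add: divide_inverse algebra_simps)
  finally show ?thesis ..
qed

end

context regularity_class
begin

lemma Ck_recip_coeffs:
  assumes "Ck m f1" "Ck m f2" "0 < d"
    and dominated: "\<And>x. x \<in> S \<Longrightarrow> (norm x)\<^sup>2 < 8 * d \<Longrightarrow> norm x * \<bar>f2 x\<bar> < \<bar>f1 x\<bar>"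
    and nonzero: "\<And>x. x \<in> S \<Longrightarrow> f1 x + norm x * f2 x \<noteq> 0"
  shows "Ck m (\<lambda>x. recip_coeff0 d x (f1 x) (f2 x))" "Ck m (\<lambda>x. recip_coeff1 d x (f1 x) (f2 x))"
proof -
  have "0 < 2 * d" "0 < 4 * d"
    using assms(3) by simp_all
  note cutoff_scales = Ck_cutoff[OF this(1)] Ck_cutoff[OF this(2)]
  have far: "Ck m (\<lambda>x. inverse (far_denom d x (f1 x) (f2 x)))"
  proof (rule Ck_inverse)
    show "Ck m (\<lambda>x. far_denom d x (f1 x) (f2 x))"
      unfolding far_denom_def using assms(1-3)
      by (intro Ck_add Ck_mult Ck_diff Ck_const Ck_cutoff Ck_smooth_norm)
    show "far_denom d x (f1 x) (f2 x) \<noteq> 0" if "x \<in> S" for x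
      using far_denom_nonzero[OF assms(3) dominated[OF that] nonzero[OF that]] .
  qed
  have near: "Ck m (\<lambda>x. inverse (near_denom d x (f1 x) (f2 x)))"
  proof (rule Ck_inverse)
    show "Ck m (\<lambda>x. near_denom d x (f1 x) (f2 x))"
      unfolding near_denom_def using assms(1-3)
      by (intro Ck_add Ck_mult Ck_diff Ck_const cutoff_scales Ck_norm_sq Ck_power)
    show "near_denom d x (f1 x) (f2 x) \<noteq> 0" if "x \<in> S" for x
      using near_denom_pos[OF assms(3) dominated[OF that] nonzero[OF that]] by simp
  qed
  show "Ck m (\<lambda>x. recip_coeff0 d x (f1 x) (f2 x))"
    unfolding recip_coeff0_def divide_inverse using assms(1,2) far near
    by (intro Ck_add Ck_mult Ck_diff Ck_const cutoff_scales)
  show "Ck m (\<lambda>x. recip_coeff1 d x (f1 x) (f2 x))"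
    unfolding recip_coeff1_def divide_inverse using assms(2) near
    by (intro Ck_uminus Ck_mult cutoff_scales)
qed

text \<open>\<open>E {m}\<close> is \<open>E\<^sup>m\<^sup>,\<^sup>\<alpha>\<close> for \<open>P = loc_holder \<alpha>\<close>, and \<open>E UNIV\<close> is \<open>E\<^sup>\<infinity>\<close> for \<open>P = continuous_on\<close>.\<close>

definition E :: "nat set \<Rightarrow> (real^3 \<Rightarrow> real) \<Rightarrow> bool" where
  "E M f \<longleftrightarrow> (\<exists>f1 f2. (\<forall>m\<in>M. Ck m f1 \<and> Ck m f2) \<and> (\<forall>x\<in>S. f x = f1 x + norm x * f2 x))"

lemma E_add:
  assumes "E M f" "E M g"
  shows "E M (\<lambda>x. f x + g x)"
proof -
  obtain f1 f2 where Ck_f: "\<forall>m\<in>M. Ck m f1 \<and> Ck m f2" and f: "\<forall>x\<in>S. f x = f1 x + norm x * f2 x"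
    using assms(1) unfolding E_def by blast
  obtain g1 g2 where Ck_g: "\<forall>m\<in>M. Ck m g1 \<and> Ck m g2" and g: "\<forall>x\<in>S. g x = g1 x + norm x * g2 x"
    using assms(2) unfolding E_def by blast
  have "\<forall>m\<in>M. Ck m (\<lambda>x. f1 x + g1 x) \<and> Ck m (\<lambda>x. f2 x + g2 x)"
    using Ck_f Ck_g by (simp add: Ck_add)
  moreover have "\<forall>x\<in>S. f x + g x = (f1 x + g1 x) + norm x * (f2 x + g2 x)"
    using f g by (simp add: algebra_simps)
  ultimately show ?thesis
    unfolding E_def by blast
qed

lemma E_mult:
  assumes "E M f" "E M g"
  shows "E M (\<lambda>x. f x * g x)"
proof -
  obtain f1 f2 where Ck_f: "\<forall>m\<in>M. Ck m f1 \<and> Ck m f2" and f: "\<forall>x\<in>S. f x = f1 x + norm x * f2 x"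
    using assms(1) unfolding E_def by blast
  obtain g1 g2 where Ck_g: "\<forall>m\<in>M. Ck m g1 \<and> Ck m g2" and g: "\<forall>x\<in>S. g x = g1 x + norm x * g2 x"
    using assms(2) unfolding E_def by blast
  have "\<forall>m\<in>M. Ck m (\<lambda>x. f1 x * g1 x + (norm x)\<^sup>2 * (f2 x * g2 x)) \<and>
      Ck m (\<lambda>x. f1 x * g2 x + f2 x * g1 x)"
    using Ck_f Ck_g by (simp add: Ck_add Ck_mult Ck_norm_sq)
  moreover have "\<forall>x\<in>S. f x * g x
      = (f1 x * g1 x + (norm x)\<^sup>2 * (f2 x * g2 x)) + norm x * (f1 x * g2 x + f2 x * g1 x)"
    using f g by (simp add: algebra_simps power2_eq_square)
  ultimately show ?thesis
    unfolding E_def by blast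
qed

lemma E_inverse:
  assumes "M \<noteq> {}" "E M f" "\<And>x. x \<in> S \<Longrightarrow> f x \<noteq> 0"
  shows "E M (\<lambda>x. inverse (f x))"
proof -
  obtain f1 f2 where Ck_f: "\<forall>m\<in>M. Ck m f1 \<and> Ck m f2" and f: "\<forall>x\<in>S. f x = f1 x + norm x * f2 x"
    using assms(2) unfolding E_def by blast
  have nonzero: "f1 x + norm x * f2 x \<noteq> 0" if "x \<in> S" for x
    using assms(3) f that by auto
  show ?thesis
  proof (cases "0 \<in> S")
    case True
    obtain m where "m \<in> M"
      using assms(1) by blast
    then have "continuous_on S f1" "continuous_on S f2"
      using Ck_f P_continuous Ck_imp_P by blast+
    moreover have "f1 0 \<noteq> 0"
      using nonzero[OF True] by simp
    ultimately obtain e where "0 < e" and e: "\<And>x. x \<in> S \<Longrightarrow> norm x < e \<Longrightarrow> norm x * \<bar>f2 x\<bar> < \<bar>f1 x\<bar>"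
      using dominated_near_0[of S f1 f2] True by blast
    define d where "d = e\<^sup>2 / 8"
    have "0 < d"
      using \<open>0 < e\<close> by (simp add: d_def)
    have dominated: "norm x * \<bar>f2 x\<bar> < \<bar>f1 x\<bar>" if "x \<in> S" "(norm x)\<^sup>2 < 8 * d" for x
      using e[OF that(1)] that(2) \<open>0 < e\<close> by (simp add: d_def power_less_imp_less_base)
    have "\<forall>m\<in>M. Ck m (\<lambda>x. recip_coeff0 d x (f1 x) (f2 x)) \<and> Ck m (\<lambda>x. recip_coeff1 d x (f1 x) (f2 x))"
      using Ck_f Ck_recip_coeffs[OF _ _ \<open>0 < d\<close> dominated nonzero] by blast
    moreover have "\<forall>x\<in>S. inverse (f x) =
        recip_coeff0 d x (f1 x) (f2 x) + norm x * recip_coeff1 d x (f1 x) (f2 x)"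
      using f inverse_eq_recip_coeffs[OF \<open>0 < d\<close> dominated nonzero] by simp
    ultimately show ?thesis
      unfolding E_def by blast
  next
    case False
    have "Ck m f" if "m \<in> M" for m
    proof (rule Ck_cong)
      have "Ck m (\<lambda>x. sqrt ((norm x)\<^sup>2))"
        using False by (intro Ck_sqrt Ck_norm_sq) auto
      then show "Ck m (\<lambda>x. f1 x + sqrt ((norm x)\<^sup>2) * f2 x)"
        using Ck_f that by (intro Ck_add Ck_mult) auto
      show "f1 x + sqrt ((norm x)\<^sup>2) * f2 x = f x" if "x \<in> S" for x
        using f that by simp
    qed
    then have "\<forall>m\<in>M. Ck m (\<lambda>x. inverse (f x)) \<and> Ck m (\<lambda>x. 0)"
      using assms(3) by (simp add: Ck_inverse Ck_const)
    then show ?thesis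
      unfolding E_def by (intro exI[of _ "\<lambda>x. inverse (f x)"] exI[of _ "\<lambda>x. 0"]) simp
  qed
qed

end

lemma E_holder_eq_E:
  assumes "0 < \<alpha>" "\<alpha> \<le> 1"
  shows "E_holder m \<alpha> a = regularity_class.E (loc_holder \<alpha> (ball 0 a)) (ball 0 a) {m}"
proof -
  interpret regularity_class "loc_holder \<alpha> (ball 0 a)" "ball 0 a"
    using regularity_class_loc_holder assms by simp
  have "C_holder m \<alpha> (ball 0 a) = Ck m"
    by (simp add: fun_eq_iff C_holder_def Ck_def)
  then show ?thesis
    by (simp add: fun_eq_iff E_holder_def E_def)
qed

lemma E_inf_eq_E: "E_inf a = regularity_class.E (continuous_on (ball 0 a)) (ball 0 a) UNIV"
proof -
  interpret regularity_class "continuous_on (ball 0 a)" "ball 0 a"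
    by (simp add: regularity_class_continuous_on)
  have "C_inf (ball 0 a) f \<longleftrightarrow> (\<forall>m. Ck m f)" for f
  proof
    assume "C_inf (ball 0 a) f"
    then show "\<forall>m. Ck m f"
      unfolding C_inf_def Ck_def
      by (blast intro: continuous_at_imp_continuous_on differentiable_imp_continuous_within)
  next
    assume "\<forall>m. Ck m f"
    then show "C_inf (ball 0 a) f"
      unfolding C_inf_def Ck_def using lessI by blast
  qed
  then show ?thesis
    by (simp add: fun_eq_iff E_inf_def E_def all_conj_distrib)
qed

theorem lemma2:
  fixes m :: nat and \<alpha> a :: real
  assumes "0 < \<alpha>" and "\<alpha> < 1"
  shows "(\<forall>f g. E_holder m \<alpha> a f \<and> E_holder m \<alpha> a g \<longrightarrow>
            E_holder m \<alpha> a (\<lambda>x. f x + g x) \<and> E_holder m \<alpha> a (\<lambda>x. f x * g x)) \<and>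
         (\<forall>f. E_holder m \<alpha> a f \<and> (\<forall>x\<in>ball 0 a. f x \<noteq> 0) \<longrightarrow>
            E_holder m \<alpha> a (\<lambda>x. 1 / f x)) \<and>
         (\<forall>f g. E_inf a f \<and> E_inf a g \<longrightarrow>
            E_inf a (\<lambda>x. f x + g x) \<and> E_inf a (\<lambda>x. f x * g x)) \<and>
         (\<forall>f. E_inf a f \<and> (\<forall>x\<in>ball 0 a. f x \<noteq> 0) \<longrightarrow>
            E_inf a (\<lambda>x. 1 / f x))"
proof -
  interpret H: regularity_class "loc_holder \<alpha> (ball 0 a)" "ball 0 a"
    using regularity_class_loc_holder assms by simp
  interpret C: regularity_class "continuous_on (ball 0 a)" "ball 0 a"
    by (simp add: regularity_class_continuous_on)
  have "H.E {m} (\<lambda>x. f x + g x) \<and> H.E {m} (\<lambda>x. f x * g x)" if "H.E {m} f" "H.E {m} g" for f g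
    using H.E_add[OF that] H.E_mult[OF that] ..
  moreover have "H.E {m} (\<lambda>x. inverse (f x))" if "H.E {m} f" "\<forall>x\<in>ball 0 a. f x \<noteq> 0" for f
    using H.E_inverse[of "{m}" f] that by blast
  moreover have "C.E UNIV (\<lambda>x. f x + g x) \<and> C.E UNIV (\<lambda>x. f x * g x)" if "C.E UNIV f" "C.E UNIV g" for f g
    using C.E_add[OF that] C.E_mult[OF that] ..
  moreover have "C.E UNIV (\<lambda>x. inverse (f x))" if "C.E UNIV f" "\<forall>x\<in>ball 0 a. f x \<noteq> 0" for f
    using C.E_inverse[of UNIV f] that by blast
  ultimately show ?thesis
    unfolding E_holder_eq_E[OF assms(1) less_imp_le[OF assms(2)]] E_inf_eq_E inverse_eq_divide[symmetric]
    by blast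
qed

end
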